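(* Let $\Delta\subset\mathbb{R}^n$ be an $n$-dimensional integral polytope containing the origin and having a unique codimension-1 face $\delta$ not containing the origin, with $\Delta$ the convex hull of $\delta$ and the origin. Let $A=\{V_1,\dots,V_J\}\subset\delta\cap\mathbb{Z}^n$ contain all vertices of $\delta$, and let $T=\{\delta_1,\dots,\delta_h\}$ be a regular decomposition of $(\delta,A)$ with associated concave function $\phi:\delta\to\mathbb{R}$. Let $r\in C(\Delta)$ and let $(u_1,\dots,u_J)$ be a rational solution of $\sum_{j=1}^J u_jV_j=r$, $u_j\ge0$, whose non-zero coordinates are $u_{j_1},\dots,u_{j_k}$. If $r\in\Sigma_i$, then $m(\phi,A;r)=\sum_{j=1}^J u_j\phi(V_j)$ if and only if $\Sigma_i$ contains all the lattice points $V_{j_1},\dots,V_{j_k}$.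
   Context: $C(\Delta)$ is the closed cone generated by $\Delta$ and the origin; $w(r)$ is the least $c\ge0$ with $r\in c\Delta$. A regular decomposition of $(\delta,A)$ is a collection of polytopes $\delta_1,\dots,\delta_h$ with vertices in $A$, of full dimension in $\delta$, whose union is $\delta$ and whose pairwise intersections have lower dimension, together with a piecewise linear function $\phi:\delta\to\mathbb{R}$ that is concave ($\phi(tx+(1-t)x')\ge t\phi(x)+(1-t)\phi(x')$) and whose domains of linearity are exactly the $\delta_i$. $\phi$ is extended to $C(\Delta)\setminus\{0\}$ by $\phi(r)=w(r)\phi(r/w(r))$. $\Sigma_i=C(\delta_i)$ is the closed cone generated by $\delta_i$ and the origin. For $r\in C(\Delta)$, $m(\phi,A;r)=\sup\{\sum_{j=1}^J u_j\phi(V_j) : \sum_j u_jV_j=r,\ u_j\ge0\}$. *)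

theory Defs
  imports "HOL-Analysis.Analysis"
begin

definition integral_point :: "real^'n \<Rightarrow> bool" where
  "integral_point x \<longleftrightarrow> (\<forall>i. x $ i \<in> \<int>)"

definition integral_polytope :: "(real^'n) set \<Rightarrow> bool" where
  "integral_polytope P \<longleftrightarrow> polytope P \<and> (\<forall>v. v extreme_point_of P \<longrightarrow> integral_point v)"

definition gen_cone :: "(real^'n) set \<Rightarrow> (real^'n) set" where
  "gen_cone S = closure (cone hull (insert 0 S))"

definition affine_on :: "(real^'n) set \<Rightarrow> (real^'n \<Rightarrow> real) \<Rightarrow> bool" where
  "affine_on S f \<longleftrightarrow> (\<exists>a b. \<forall>x\<in>S. f x = a \<bullet> x + b)"

definition linearity_domain :: "(real^'n) set \<Rightarrow> (real^'n \<Rightarrow> real) \<Rightarrow> (real^'n) set \<Rightarrow> bool" where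
  "linearity_domain \<delta> \<phi> S \<longleftrightarrow> convex S \<and> S \<noteq> {} \<and> S \<subseteq> \<delta> \<and> affine_on S \<phi> \<and>
     (\<forall>S'. convex S' \<and> S \<subseteq> S' \<and> S' \<subseteq> \<delta> \<and> affine_on S' \<phi> \<longrightarrow> S' = S)"

definition regular_decomposition ::
  "(real^'n) set \<Rightarrow> (real^'n) set \<Rightarrow> nat \<Rightarrow> (nat \<Rightarrow> (real^'n) set) \<Rightarrow> (real^'n \<Rightarrow> real) \<Rightarrow> bool" where
  "regular_decomposition \<delta> A h D \<phi> \<longleftrightarrow>
     (\<forall>i<h. polytope (D i) \<and> (\<forall>v. v extreme_point_of D i \<longrightarrow> v \<in> A)
            \<and> aff_dim (D i) = aff_dim \<delta>) \<and>
     (\<Union>i<h. D i) = \<delta> \<and>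
     (\<forall>i<h. \<forall>k<h. i \<noteq> k \<longrightarrow> aff_dim (D i \<inter> D k) < aff_dim \<delta>) \<and>
     concave_on \<delta> \<phi> \<and>
     {S. linearity_domain \<delta> \<phi> S} = D ` {..<h}"

definition m_sup :: "(real^'n \<Rightarrow> real) \<Rightarrow> nat \<Rightarrow> (nat \<Rightarrow> real^'n) \<Rightarrow> real^'n \<Rightarrow> real" where
  "m_sup \<phi> J V r = Sup {(\<Sum>j<J. u j * \<phi> (V j)) | u.
       (\<forall>j<J. u j \<ge> 0) \<and> (\<Sum>j<J. u j *\<^sub>R V j) = r}"

end

theory Submission
  imports Defs
begin

text \<open>
  Cut \<open>\<delta>\<close> out of \<open>\<Delta>\<close> by a hyperplane \<open>a \<bullet> x = b\<close> with \<open>b \<noteq> 0\<close>. On the cell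
  \<open>D i\<close> the function \<open>\<phi>\<close> is affine, hence (using the hyperplane) the restriction of a
  linear form \<open>w\<close>. Since the cell is full-dimensional in \<open>\<delta>\<close>, concavity forces
  \<open>\<phi> \<le> w\<close> on all of \<open>\<delta>\<close>, and maximality of the linearity domain makes \<open>D i\<close> exactly
  the contact set \<open>{\<phi> = w}\<close>. So every admissible combination has value at most
  \<open>w \<bullet> r\<close>, with equality iff it only uses points of the contact set; writing \<open>r\<close>
  through the vertices of \<open>D i\<close> shows the bound is attained, i.e. \<open>m(\<phi>, A; r) = w \<bullet> r\<close>.
  Finally the points of \<open>\<delta>\<close> lying in the cone over \<open>D i\<close> are exactly those of \<open>D i\<close>.
\<close>

lemma cone_hull_insert_zero:
  assumes "S \<noteq> {}"
  shows "cone hull (insert 0 S) = conic hull S"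
  using assms unfolding cone_hull_expl conic_hull_explicit by fastforce

lemma gen_cone_eq_conic_hull:
  assumes "compact S" "S \<noteq> {}" "0 \<notin> S"
  shows "gen_cone S = conic hull S"
  using closed_conic_hull[of S] assms
  by (simp add: gen_cone_def cone_hull_insert_zero)

lemma gen_cone_Int_hyperplane:
  fixes S :: "(real^'n) set"
  assumes "compact S" "S \<subseteq> {x. a \<bullet> x = b}" "b \<noteq> 0"
  shows "gen_cone S \<inter> {x. a \<bullet> x = b} = S"
proof (cases "S = {}")
  case True
  have "cone hull {0} = {0 :: real^'n}"
    by (simp add: cone_hull_eq cone_def)
  then show ?thesis using True assms(3) by (simp add: gen_cone_def)
next
  case False
  have "0 \<notin> S" using assms(2,3) by auto
  have "z \<in> S" if z: "z \<in> conic hull S" "a \<bullet> z = b" for z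
  proof -
    obtain t x where tx: "z = t *\<^sub>R x" "x \<in> S"
      using z(1) unfolding conic_hull_explicit by blast
    then have "t * b = b" using z(2) assms(2) by auto
    then show ?thesis using tx assms(3) by simp
  qed
  moreover have "S \<subseteq> conic hull S" by (rule hull_subset)
  ultimately show ?thesis
    using gen_cone_eq_conic_hull[OF assms(1) False \<open>0 \<notin> S\<close>] assms(2) by blast
qed

lemma polytope_gen_cone_nonneg_combination:
  fixes P :: "(real^'n) set" and V :: "nat \<Rightarrow> real^'n"
  assumes "polytope P" "P \<noteq> {}" "0 \<notin> P" "inj_on V {..<J}"
    and "\<forall>v. v extreme_point_of P \<longrightarrow> v \<in> V ` {..<J}" "r \<in> gen_cone P"
  obtains v where "\<forall>j<J. 0 \<le> v j" "\<forall>j<J. v j \<noteq> 0 \<longrightarrow> V j \<in> P"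
    "(\<Sum>j<J. v j *\<^sub>R V j) = r"
proof -
  have compact: "compact P" using assms(1) polytope_imp_compact by blast
  obtain t x where tx: "r = t *\<^sub>R x" "0 \<le> t" "x \<in> P"
    using assms(6) gen_cone_eq_conic_hull[OF compact assms(2,3)]
    unfolding conic_hull_explicit by blast
  define K where "K = {j. j < J \<and> V j \<in> P}"
  have KJ: "K \<subseteq> {..<J}" by (auto simp: K_def)
  have K: "finite K" "inj_on V K"
    using finite_subset[OF KJ finite_lessThan] inj_on_subset[OF assms(4) KJ] .
  have "{v. v extreme_point_of P} \<subseteq> V ` K"
  proof
    fix p assume "p \<in> {v. v extreme_point_of P}"
    then have p: "p extreme_point_of P" by simp
    then obtain j where "j < J" "p = V j" using assms(5) by blast
    moreover have "p \<in> P" using p extreme_point_of_def by blast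
    ultimately show "p \<in> V ` K" by (auto simp: K_def)
  qed
  moreover have "P = convex hull {v. v extreme_point_of P}"
    using Krein_Milman_Minkowski[OF compact polytope_imp_convex[OF assms(1)]] .
  ultimately have "x \<in> convex hull (V ` K)"
    using tx(3) hull_mono by blast
  then obtain \<mu> where \<mu>: "\<forall>p\<in>V ` K. 0 \<le> \<mu> p" "(\<Sum>p\<in>V ` K. \<mu> p *\<^sub>R p) = x"
    unfolding convex_hull_finite[OF finite_imageI[OF K(1)]] by blast
  define v where "v j = (if j \<in> K then t * \<mu> (V j) else 0)" for j
  have "(\<Sum>j<J. v j *\<^sub>R V j) = (\<Sum>j\<in>K. v j *\<^sub>R V j)"
    by (rule sum.mono_neutral_right) (use KJ in \<open>auto simp: v_def\<close>)
  also have "\<dots> = t *\<^sub>R (\<Sum>p\<in>V ` K. \<mu> p *\<^sub>R p)"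
    by (simp add: v_def scaleR_sum_right sum.reindex[OF K(2)])
  finally have "(\<Sum>j<J. v j *\<^sub>R V j) = r" using \<mu> tx by simp
  moreover have "\<forall>j<J. 0 \<le> v j" "\<forall>j<J. v j \<noteq> 0 \<longrightarrow> V j \<in> P"
    using \<mu> tx by (auto simp: v_def K_def)
  ultimately show thesis by (rule that[rotated 2])
qed

lemma concave_on_le_linear_of_eq_on_full_dim:
  fixes f :: "'a::euclidean_space \<Rightarrow> real"
  assumes "concave_on T f" "convex S" "S \<noteq> {}" "S \<subseteq> T" "aff_dim S = aff_dim T"
    and "\<forall>y\<in>S. f y = w \<bullet> y" and "x \<in> T"
  shows "f x \<le> w \<bullet> x"
proof -
  obtain y where y: "y \<in> rel_interior S"
    using assms(2,3) rel_interior_eq_empty by blast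
  have hulls: "affine hull S = affine hull T"
  proof (rule affine_dim_equal)
    show "affine hull S \<subseteq> affine hull T" using assms(4) by (rule hull_mono)
  qed (use assms(3,5) in auto)
  have "x \<in> affine hull S"
    unfolding hulls using assms(7) by (rule hull_inc)
  \<comment> \<open>Prolong the segment from \<open>x\<close> beyond the relative interior point \<open>y\<close> to a point
    \<open>y'\<close> of \<open>S\<close>; concavity along \<open>[y', x]\<close> at \<open>y\<close> then bounds \<open>f x\<close>.\<close>
  from bspec[OF convex_rel_interior_if2[OF assms(2) y] this]
  obtain e where e: "e > 1" and "(1 - e) *\<^sub>R x + e *\<^sub>R y \<in> S"
    by blast
  moreover define y' where "y' = (1 - e) *\<^sub>R x + e *\<^sub>R y"
  ultimately have y': "y' \<in> S" by simp
  have yS: "y \<in> S" using y rel_interior_subset by blast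
  define p where "p = 1 / e"
  have p: "0 < p" "p < 1" using e by (auto simp: p_def)
  have "p * e = 1" "p * (1 - e) + (1 - p) = 0"
    using e by (simp_all add: p_def field_simps)
  moreover have "p *\<^sub>R y' + (1 - p) *\<^sub>R x = (p * e) *\<^sub>R y + (p * (1 - e) + (1 - p)) *\<^sub>R x"
    by (simp add: y'_def algebra_simps)
  ultimately have y_comb: "p *\<^sub>R y' + (1 - p) *\<^sub>R x = y" by simp
  have "p * f y' + (1 - p) * f x \<le> f y"
    using assms(1) assms(4,7) y' p unfolding concave_on_iff y_comb[symmetric]
    by (simp add: subset_iff)
  also have "f y = p * (w \<bullet> y') + (1 - p) * (w \<bullet> x)"
    using assms(6) yS y_comb by (metis inner_add_right inner_scaleR_right)
  finally have "(1 - p) * f x \<le> (1 - p) * (w \<bullet> x)"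
    using assms(6) y' by simp
  then show ?thesis using p by simp
qed

lemma convex_linear_le_concave:
  fixes f :: "'a::real_inner \<Rightarrow> real"
  assumes "concave_on T f"
  shows "convex {x\<in>T. w \<bullet> x \<le> f x}"
proof (rule convexI)
  fix x y :: 'a and u v :: real
  assume "x \<in> {x\<in>T. w \<bullet> x \<le> f x}" "y \<in> {x\<in>T. w \<bullet> x \<le> f x}"
    and uv: "0 \<le> u" "0 \<le> v" "u + v = 1"
  then have xy: "x \<in> T" "w \<bullet> x \<le> f x" "y \<in> T" "w \<bullet> y \<le> f y" by auto
  have "u *\<^sub>R x + v *\<^sub>R y \<in> T"
    using assms xy uv concave_on_iff convexD by metis
  have "w \<bullet> (u *\<^sub>R x + v *\<^sub>R y) = u * (w \<bullet> x) + v * (w \<bullet> y)"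
    by (simp add: inner_add_right)
  also have "\<dots> \<le> u * f x + v * f y"
    using xy uv by (intro add_mono mult_left_mono)
  also have "\<dots> \<le> f (u *\<^sub>R x + v *\<^sub>R y)"
    using assms xy uv unfolding concave_on_iff by blast
  finally show "u *\<^sub>R x + v *\<^sub>R y \<in> {x\<in>T. w \<bullet> x \<le> f x}"
    using \<open>u *\<^sub>R x + v *\<^sub>R y \<in> T\<close> by simp
qed

lemma affine_on_subset_hyperplane_linear:
  assumes "affine_on S f" "S \<subseteq> {x. a \<bullet> x = b}" "b \<noteq> 0"
  obtains w where "\<forall>x\<in>S. f x = w \<bullet> x"
proof -
  obtain c d where cd: "\<forall>x\<in>S. f x = c \<bullet> x + d"
    using assms(1) affine_on_def by blast
  have "\<forall>x\<in>S. f x = (c + (d / b) *\<^sub>R a) \<bullet> x"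
    using cd assms(2,3) by (auto simp: inner_add_left)
  then show thesis by (rule that)
qed

lemma weighted_sum_le_linear:
  fixes V :: "nat \<Rightarrow> 'a::real_inner"
  assumes "\<forall>j<J. \<phi> (V j) \<le> w \<bullet> V j" "\<forall>j<J. 0 \<le> u j"
  shows "(\<Sum>j<J. u j * \<phi> (V j)) \<le> w \<bullet> (\<Sum>j<J. u j *\<^sub>R V j)"
proof -
  have "(\<Sum>j<J. u j * \<phi> (V j)) \<le> (\<Sum>j<J. u j * (w \<bullet> V j))"
    using assms by (intro sum_mono mult_left_mono) auto
  then show ?thesis by (simp add: inner_sum_right)
qed

lemma weighted_sum_eq_linear_iff:
  fixes V :: "nat \<Rightarrow> 'a::real_inner"
  assumes "\<forall>j<J. \<phi> (V j) \<le> w \<bullet> V j" "\<forall>j<J. 0 \<le> u j"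
  shows "(\<Sum>j<J. u j * \<phi> (V j)) = w \<bullet> (\<Sum>j<J. u j *\<^sub>R V j) \<longleftrightarrow>
         (\<forall>j<J. u j \<noteq> 0 \<longrightarrow> \<phi> (V j) = w \<bullet> V j)"
proof -
  have "w \<bullet> (\<Sum>j<J. u j *\<^sub>R V j) - (\<Sum>j<J. u j * \<phi> (V j))
           = (\<Sum>j<J. u j * (w \<bullet> V j - \<phi> (V j)))"
    by (simp add: inner_sum_right right_diff_distrib sum_subtractf)
  then have "(\<Sum>j<J. u j * \<phi> (V j)) = w \<bullet> (\<Sum>j<J. u j *\<^sub>R V j) \<longleftrightarrow>
             (\<Sum>j<J. u j * (w \<bullet> V j - \<phi> (V j))) = 0"
    by linarith
  also have "\<dots> \<longleftrightarrow> (\<forall>j\<in>{..<J}. u j * (w \<bullet> V j - \<phi> (V j)) = 0)"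
    using assms by (intro sum_nonneg_eq_0_iff) auto
  also have "\<dots> \<longleftrightarrow> (\<forall>j<J. u j \<noteq> 0 \<longrightarrow> \<phi> (V j) = w \<bullet> V j)"
    by auto
  finally show ?thesis .
qed

lemma m_sup_eq_linear:
  assumes bound: "\<forall>j<J. \<phi> (V j) \<le> w \<bullet> V j"
    and v: "\<forall>j<J. 0 \<le> v j" "(\<Sum>j<J. v j *\<^sub>R V j) = r"
    and tight: "\<forall>j<J. v j \<noteq> 0 \<longrightarrow> \<phi> (V j) = w \<bullet> V j"
  shows "m_sup \<phi> J V r = w \<bullet> r"
  unfolding m_sup_def
proof (rule cSup_eq_maximum)
  have "(\<Sum>j<J. v j * \<phi> (V j)) = w \<bullet> r"
    using weighted_sum_eq_linear_iff[OF bound v(1)] tight v(2) by simp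
  then show "w \<bullet> r \<in> {\<Sum>j<J. u j * \<phi> (V j) |u. (\<forall>j<J. 0 \<le> u j) \<and> (\<Sum>j<J. u j *\<^sub>R V j) = r}"
    using v by (intro CollectI exI[of _ v]) simp
next
  fix x
  assume "x \<in> {\<Sum>j<J. u j * \<phi> (V j) |u. (\<forall>j<J. 0 \<le> u j) \<and> (\<Sum>j<J. u j *\<^sub>R V j) = r}"
  then obtain u where "x = (\<Sum>j<J. u j * \<phi> (V j))" "\<forall>j<J. 0 \<le> u j" "(\<Sum>j<J. u j *\<^sub>R V j) = r"
    by blast
  then show "x \<le> w \<bullet> r" using weighted_sum_le_linear[OF bound] by blast
qed

lemma linearity_domain_eq_contact_set:
  assumes "linearity_domain \<delta> \<phi> S" "concave_on \<delta> \<phi>"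
    and "\<forall>x\<in>\<delta>. \<phi> x \<le> w \<bullet> x" "\<forall>y\<in>S. \<phi> y = w \<bullet> y"
  shows "S = {x\<in>\<delta>. \<phi> x = w \<bullet> x}"
proof -
  have contact: "{x\<in>\<delta>. \<phi> x = w \<bullet> x} = {x\<in>\<delta>. w \<bullet> x \<le> \<phi> x}"
    using assms(3) by force
  have "convex {x\<in>\<delta>. \<phi> x = w \<bullet> x}"
    unfolding contact using assms(2) by (rule convex_linear_le_concave)
  moreover have "affine_on {x\<in>\<delta>. \<phi> x = w \<bullet> x} \<phi>"
    unfolding affine_on_def by (rule exI[of _ w], rule exI[of _ 0]) simp
  moreover have "S \<subseteq> {x\<in>\<delta>. \<phi> x = w \<bullet> x}"
    using assms(1,4) unfolding linearity_domain_def by blast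
  ultimately show ?thesis
    using assms(1) unfolding linearity_domain_def by (metis (no_types, lifting) mem_Collect_eq subsetI)
qed

lemma regular_decomposition_cellD:
  assumes "regular_decomposition \<delta> A h D \<phi>" "i < h"
  shows "polytope (D i)" "\<forall>v. v extreme_point_of D i \<longrightarrow> v \<in> A"
    and "aff_dim (D i) = aff_dim \<delta>" "linearity_domain \<delta> \<phi> (D i)"
  using assms unfolding regular_decomposition_def by blast+

lemma regular_decomposition_cell_support:
  assumes "regular_decomposition \<delta> A h D \<phi>" "i < h" "\<delta> \<subseteq> {x. a \<bullet> x = b}" "b \<noteq> 0"
  obtains w where "\<forall>x\<in>\<delta>. \<phi> x \<le> w \<bullet> x" "D i = {x\<in>\<delta>. \<phi> x = w \<bullet> x}"
    and "\<forall>x\<in>\<delta>. \<phi> x = w \<bullet> x \<longleftrightarrow> x \<in> gen_cone (D i)"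
proof -
  note cell = regular_decomposition_cellD[OF assms(1,2)]
  have concave: "concave_on \<delta> \<phi>"
    using assms(1) unfolding regular_decomposition_def by blast
  have D: "convex (D i)" "D i \<noteq> {}" "D i \<subseteq> \<delta>" "affine_on (D i) \<phi>"
    using cell(4) unfolding linearity_domain_def by blast+
  obtain w where w: "\<forall>y\<in>D i. \<phi> y = w \<bullet> y"
    using affine_on_subset_hyperplane_linear[OF D(4) order_trans[OF D(3) assms(3)] assms(4)] .
  have bound: "\<forall>x\<in>\<delta>. \<phi> x \<le> w \<bullet> x"
    using concave_on_le_linear_of_eq_on_full_dim[OF concave D(1-3) cell(3) w] by blast
  have contact: "D i = {x\<in>\<delta>. \<phi> x = w \<bullet> x}"
    using linearity_domain_eq_contact_set[OF cell(4) concave bound w] .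
  have "gen_cone (D i) \<inter> {x. a \<bullet> x = b} = D i"
    using gen_cone_Int_hyperplane[OF polytope_imp_compact[OF cell(1)] _ assms(4)] D(3) assms(3)
    by blast
  then have "\<forall>x\<in>\<delta>. \<phi> x = w \<bullet> x \<longleftrightarrow> x \<in> gen_cone (D i)"
    using contact assms(3) by blast
  with bound contact show thesis by (rule that)
qed

lemma m_sup_eq_cell_support:
  assumes "regular_decomposition \<delta> (V ` {..<J}) h D \<phi>" "i < h" "0 \<notin> \<delta>"
    and "inj_on V {..<J}" "\<forall>j<J. V j \<in> \<delta>" "r \<in> gen_cone (D i)"
    and "\<forall>x\<in>\<delta>. \<phi> x \<le> w \<bullet> x" "D i = {x\<in>\<delta>. \<phi> x = w \<bullet> x}"
  shows "m_sup \<phi> J V r = w \<bullet> r"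
proof -
  note cell = regular_decomposition_cellD[OF assms(1,2)]
  have "D i \<noteq> {}" using cell(4) unfolding linearity_domain_def by blast
  moreover have "0 \<notin> D i" using assms(3,8) by blast
  ultimately obtain v where v: "\<forall>j<J. 0 \<le> v j" "\<forall>j<J. v j \<noteq> 0 \<longrightarrow> V j \<in> D i"
    "(\<Sum>j<J. v j *\<^sub>R V j) = r"
    using polytope_gen_cone_nonneg_combination[OF cell(1) _ _ assms(4) cell(2) assms(6)] by blast
  have "\<forall>j<J. v j \<noteq> 0 \<longrightarrow> \<phi> (V j) = w \<bullet> V j"
    using v(2) assms(8) by blast
  moreover have "\<forall>j<J. \<phi> (V j) \<le> w \<bullet> V j"
    using assms(5,7) by blast
  ultimately show ?thesis
    using m_sup_eq_linear v(1,3) by blast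
qed

theorem mainTheorem2:
  fixes \<Delta> \<delta> :: "(real^'n) set"
    and J h :: nat and V :: "nat \<Rightarrow> real^'n"
    and D :: "nat \<Rightarrow> (real^'n) set" and \<phi> :: "real^'n \<Rightarrow> real"
    and r :: "real^'n" and u :: "nat \<Rightarrow> real" and i :: nat
  assumes "integral_polytope \<Delta>"
    and "aff_dim \<Delta> = int CARD('n)"
    and "0 \<in> \<Delta>"
    and "\<delta> facet_of \<Delta>" and "0 \<notin> \<delta>"
    and "\<forall>F. F facet_of \<Delta> \<and> 0 \<notin> F \<longrightarrow> F = \<delta>"
    and "\<Delta> = convex hull (insert 0 \<delta>)"
    and "inj_on V {..<J}"
    and "\<forall>j<J. V j \<in> \<delta> \<and> integral_point (V j)"
    and "\<forall>v. v extreme_point_of \<delta> \<longrightarrow> v \<in> V ` {..<J}"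
    and "regular_decomposition \<delta> (V ` {..<J}) h D \<phi>"
    and "r \<in> gen_cone \<Delta>"
    and "\<forall>j<J. u j \<in> \<rat> \<and> u j \<ge> 0"
    and "(\<Sum>j<J. u j *\<^sub>R V j) = r"
    and "i < h"
    and "r \<in> gen_cone (D i)"
  shows "m_sup \<phi> J V r = (\<Sum>j<J. u j * \<phi> (V j)) \<longleftrightarrow>
         (\<forall>j<J. u j \<noteq> 0 \<longrightarrow> V j \<in> gen_cone (D i))"
proof -
  have "polyhedron \<Delta>"
    using assms(1) polytope_imp_polyhedron unfolding integral_polytope_def by blast
  then obtain a b where "\<delta> = \<Delta> \<inter> {x. a \<bullet> x = b}"
    using facet_of_polyhedron[OF _ assms(4)] by blast
  then have hyperplane: "\<delta> \<subseteq> {x. a \<bullet> x = b}" and "b \<noteq> 0"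
    using assms(3,5) by auto
  obtain w where bound: "\<forall>x\<in>\<delta>. \<phi> x \<le> w \<bullet> x" and cell: "D i = {x\<in>\<delta>. \<phi> x = w \<bullet> x}"
    and tight: "\<forall>x\<in>\<delta>. \<phi> x = w \<bullet> x \<longleftrightarrow> x \<in> gen_cone (D i)"
    using regular_decomposition_cell_support[OF assms(11,15) hyperplane \<open>b \<noteq> 0\<close>] by blast
  have V: "\<forall>j<J. V j \<in> \<delta>" using assms(9) by blast
  have m_sup: "m_sup \<phi> J V r = w \<bullet> r"
    using m_sup_eq_cell_support[OF assms(11,15,5,8) V assms(16) bound cell] .
  have "\<forall>j<J. \<phi> (V j) \<le> w \<bullet> V j" "\<forall>j<J. 0 \<le> u j"
    using bound V assms(13) by blast+
  from weighted_sum_eq_linear_iff[OF this]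
  have "w \<bullet> r = (\<Sum>j<J. u j * \<phi> (V j)) \<longleftrightarrow> (\<forall>j<J. u j \<noteq> 0 \<longrightarrow> V j \<in> gen_cone (D i))"
    unfolding assms(14) using tight V by auto
  with m_sup show ?thesis by simp
qed

end
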